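(* For all integers $L\ge 0$ and $n\ge 0$, $A_{L,0}(n)\ge A_{L,1}(n)$, and the inequality is strict whenever $L\ge 1$ and $n\notin\{0,3,5,6\}$.
   Context: For $i\in\{0,1\}$, $A_{L,i}(n)$ denotes the number of partitions of $n$ into parts congruent to $\pm(1+2i)\pmod 8$ with largest part at most $8L-2i-1$; equivalently $\sum_{n\ge0}A_{L,i}(n)q^n = 1/\big((q^{1+2i};q^8)_L(q^{7-2i};q^8)_L\big)$ with $(a;q)_L=\prod_{j=0}^{L-1}(1-aq^j)$. *)

theory Defs
  imports Main "HOL-Library.Multiset"
begin

definition parts_A :: "nat \<Rightarrow> nat \<Rightarrow> nat set" where
  "parts_A L i = {k::nat. 0 < k \<and> (int k mod 8 = int (1 + 2*i) mod 8 \<or> int k mod 8 = (- int (1 + 2*i)) mod 8)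
                     \<and> int k \<le> 8 * int L - 2 * int i - 1}"

definition A :: "nat \<Rightarrow> nat \<Rightarrow> nat \<Rightarrow> nat" where
  "A L i n = card {M :: nat multiset. set_mset M \<subseteq> parts_A L i \<and> sum_mset M = n}"

end

theory Submission
  imports Defs
begin

text \<open>
  Let a partition into parts \<open>\<equiv> \<plusminus>3 (mod 8)\<close> have \<open>a\<close> parts \<open>\<equiv> 3\<close> and \<open>b\<close> parts \<open>\<equiv> 5\<close>,
  and put \<open>d = a - b\<close>. If \<open>d \<ge> 0\<close>, move every part by 2 (\<open>3 \<mapsto> 1\<close>, \<open>5 \<mapsto> 7\<close> mod 8) and add
  \<open>2d\<close> ones; if \<open>d < 0\<close>, move every part by 4 (\<open>3 \<mapsto> 7\<close>, \<open>5 \<mapsto> 1\<close> mod 8) and add \<open>-4d\<close>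
  ones, seven of which are merged into one part 7 when \<open>3 dvd d\<close>. This keeps the sum and the
  bound on the parts, and the image has \<open>(#parts \<equiv> 1) - (#parts \<equiv> 7)\<close> equal to \<open>3d\<close>,
  \<open>-5d - 8\<close> or \<open>-5d\<close> respectively. These three cases are told apart modulo 15, so this value
  determines \<open>d\<close> and the map is injective. Modulo 15 the value also avoids
  \<open>1, 2, 4, 8, 11, 13, 14\<close>, so for a suitable \<open>k \<le> 2\<close> the partition of \<open>n\<close> into \<open>k\<close> sevens
  and ones is missed unless \<open>n \<in> {0, 3, 5, 6}\<close>.
\<close>

lemma mem_parts_A_0_iff:
  "k \<in> parts_A L 0 \<longleftrightarrow> 0 < k \<and> (k mod 8 = 1 \<or> k mod 8 = 7) \<and> k + 1 \<le> 8 * L"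
proof -
  have "int k mod 8 = int (k mod 8)"
    by (simp add: zmod_int)
  then show ?thesis
    unfolding parts_A_def by simp linarith
qed

lemma mem_parts_A_1_iff:
  "k \<in> parts_A L 1 \<longleftrightarrow> 0 < k \<and> (k mod 8 = 3 \<or> k mod 8 = 5) \<and> k + 3 \<le> 8 * L"
proof -
  have "int k mod 8 = int (k mod 8)"
    by (simp add: zmod_int)
  then show ?thesis
    unfolding parts_A_def by simp linarith
qed

lemma mem_parts_A_1_cases:
  assumes "k \<in> parts_A L 1"
  obtains q where "k = 8 * q + 3" "q < L" | q where "k = 8 * q + 5" "q < L"
proof -
  have k: "k mod 8 = 3 \<or> k mod 8 = 5" "k + 3 \<le> 8 * L"
    using assms unfolding mem_parts_A_1_iff by simp_all
  have "k = 8 * (k div 8) + k mod 8"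
    by simp
  moreover from this k have "k div 8 < L"
    by linarith
  ultimately show ?thesis
    using k that by metis
qed

definition partitions :: "nat set \<Rightarrow> nat \<Rightarrow> nat multiset set" where
  "partitions P n = {M. set_mset M \<subseteq> P \<and> sum_mset M = n}"

lemma A_eq_card_partitions: "A L i n = card (partitions (parts_A L i) n)"
  by (simp add: A_def partitions_def)

lemma size_le_sum_mset: "0 \<notin># M \<Longrightarrow> size M \<le> sum_mset (M :: nat multiset)"
  by (induction M) auto

lemma mem_le_sum_mset: "x \<in># M \<Longrightarrow> x \<le> sum_mset (M :: nat multiset)"
  by (induction M) auto

lemma finite_partitions:
  assumes "0 \<notin> P"
  shows "finite (partitions P n)"
proof (rule finite_subset)
  show "partitions P n \<subseteq> (\<Union>s\<le>n. multisets_of_size {..n} s)"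
  proof
    fix M assume "M \<in> partitions P n"
    then have "0 \<notin># M" "sum_mset M = n"
      using assms by (auto simp: partitions_def)
    then show "M \<in> (\<Union>s\<le>n. multisets_of_size {..n} s)"
      using size_le_sum_mset mem_le_sum_mset by (fastforce simp: multisets_of_size_def)
  qed
qed auto

lemma inj_on_image_mset:
  assumes "inj_on f S"
  shows "inj_on (image_mset f) {M. set_mset M \<subseteq> S}"
proof (rule inj_on_inverseI)
  fix M assume "M \<in> {M. set_mset M \<subseteq> S}"
  then show "image_mset (inv_into S f) (image_mset f M) = M"
    using assms by (auto simp: multiset.map_comp inv_into_f_f intro!: multiset.map_ident_strong)
qed

definition residue_count :: "nat \<Rightarrow> nat multiset \<Rightarrow> nat" where
  "residue_count r M = size (filter_mset (\<lambda>k. k mod 8 = r) M)"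

lemma residue_count_empty [simp]: "residue_count r {#} = 0"
  by (simp add: residue_count_def)

lemma residue_count_add_mset [simp]:
  "residue_count r (add_mset k M) = residue_count r M + of_bool (k mod 8 = r)"
  by (simp add: residue_count_def)

lemma residue_count_union [simp]: "residue_count r (M + N) = residue_count r M + residue_count r N"
  by (simp add: residue_count_def)

lemma residue_count_replicate_mset [simp]:
  "residue_count r (replicate_mset m k) = m * of_bool (k mod 8 = r)"
  by (induction m) auto

lemma residue_count_image_mset:
  assumes "\<forall>k\<in>#M. f k mod 8 = r \<longleftrightarrow> k mod 8 = s"
  shows "residue_count r (image_mset f M) = residue_count s M"
  using assms by (induction M) auto

lemma sum_image_mset_shift:
  assumes "\<forall>k\<in>#M. int (f k) = int k + c * (of_bool (k mod 8 = p) - of_bool (k mod 8 = q))"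
  shows "int (sum_mset (image_mset f M))
    = int (sum_mset M) + c * (int (residue_count p M) - int (residue_count q M))"
  using assms by (induction M) (auto simp: algebra_simps)

definition balance_0 :: "nat multiset \<Rightarrow> int" where
  "balance_0 T = int (residue_count 1 T) - int (residue_count 7 T)"

definition balance_1 :: "nat multiset \<Rightarrow> int" where
  "balance_1 M = int (residue_count 3 M) - int (residue_count 5 M)"

lemma balance_0_union [simp]: "balance_0 (M + N) = balance_0 M + balance_0 N"
  by (simp add: balance_0_def)

definition shift2 :: "nat \<Rightarrow> nat" where
  "shift2 k = (if k mod 8 = 3 then k - 2 else k + 2)"

definition shift4 :: "nat \<Rightarrow> nat" where
  "shift4 k = (if k mod 8 = 3 then k + 4 else k - 4)"

lemma
  assumes "k \<in> parts_A L 1"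
  shows shift2_mem_parts_A: "shift2 k \<in> parts_A L 0"
    and shift2_mod_8: "(shift2 k mod 8 = 1 \<longleftrightarrow> k mod 8 = 3) \<and> (shift2 k mod 8 = 7 \<longleftrightarrow> k mod 8 = 5)"
    and shift2_eq: "int (shift2 k) = int k + 2 * (of_bool (k mod 8 = 5) - of_bool (k mod 8 = 3))"
  using assms by (cases rule: mem_parts_A_1_cases; simp add: shift2_def mem_parts_A_0_iff)+

lemma
  assumes "k \<in> parts_A L 1"
  shows shift4_mem_parts_A: "shift4 k \<in> parts_A L 0"
    and shift4_mod_8: "(shift4 k mod 8 = 1 \<longleftrightarrow> k mod 8 = 5) \<and> (shift4 k mod 8 = 7 \<longleftrightarrow> k mod 8 = 3)"
    and shift4_eq: "int (shift4 k) = int k + 4 * (of_bool (k mod 8 = 3) - of_bool (k mod 8 = 5))"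
  using assms by (cases rule: mem_parts_A_1_cases; simp add: shift4_def mem_parts_A_0_iff)+

lemma inj_on_shift2: "inj_on shift2 (parts_A L 1)"
  by (rule inj_onI) (elim mem_parts_A_1_cases; simp add: shift2_def; presburger)

lemma inj_on_shift4: "inj_on shift4 (parts_A L 1)"
  by (rule inj_onI) (elim mem_parts_A_1_cases; simp add: shift4_def; presburger)

lemma
  assumes "set_mset M \<subseteq> parts_A L 1"
  shows balance_0_image_shift2: "balance_0 (image_mset shift2 M) = balance_1 M"
    and sum_mset_image_shift2: "int (sum_mset (image_mset shift2 M)) = int (sum_mset M) - 2 * balance_1 M"
proof -
  have "residue_count 1 (image_mset shift2 M) = residue_count 3 M"
    "residue_count 7 (image_mset shift2 M) = residue_count 5 M"
    using assms shift2_mod_8 by (intro residue_count_image_mset; blast)+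
  then show "balance_0 (image_mset shift2 M) = balance_1 M"
    unfolding balance_0_def balance_1_def by simp
  have "int (sum_mset (image_mset shift2 M))
      = int (sum_mset M) + 2 * (int (residue_count 5 M) - int (residue_count 3 M))"
    using assms shift2_eq by (intro sum_image_mset_shift) blast
  then show "int (sum_mset (image_mset shift2 M)) = int (sum_mset M) - 2 * balance_1 M"
    unfolding balance_1_def by simp
qed

lemma
  assumes "set_mset M \<subseteq> parts_A L 1"
  shows balance_0_image_shift4: "balance_0 (image_mset shift4 M) = - balance_1 M"
    and sum_mset_image_shift4: "int (sum_mset (image_mset shift4 M)) = int (sum_mset M) + 4 * balance_1 M"
proof -
  have "residue_count 1 (image_mset shift4 M) = residue_count 5 M"
    "residue_count 7 (image_mset shift4 M) = residue_count 3 M"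
    using assms shift4_mod_8 by (intro residue_count_image_mset; blast)+
  then show "balance_0 (image_mset shift4 M) = - balance_1 M"
    unfolding balance_0_def balance_1_def by simp
  have "int (sum_mset (image_mset shift4 M))
      = int (sum_mset M) + 4 * (int (residue_count 3 M) - int (residue_count 5 M))"
    using assms shift4_eq by (intro sum_image_mset_shift) blast
  then show "int (sum_mset (image_mset shift4 M)) = int (sum_mset M) + 4 * balance_1 M"
    unfolding balance_1_def by simp
qed

definition padding :: "int \<Rightarrow> nat multiset" where
  "padding d =
    (if 0 \<le> d then replicate_mset (nat (2 * d)) 1
     else if 3 dvd d then add_mset 7 (replicate_mset (nat (- 4 * d - 7)) 1)
     else replicate_mset (nat (- 4 * d)) 1)"

definition balance_code :: "int \<Rightarrow> int" where
  "balance_code d = (if 0 \<le> d then 3 * d else if 3 dvd d then - 5 * d - 8 else - 5 * d)"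

lemma negative_dvd_3_le: "d < 0 \<Longrightarrow> 3 dvd d \<Longrightarrow> d \<le> (- 3 :: int)"
  by presburger

lemma set_mset_padding: "set_mset (padding d) \<subseteq> {1, 7}"
  by (auto simp: padding_def)

lemma sum_mset_padding: "int (sum_mset (padding d)) = (if 0 \<le> d then 2 * d else - 4 * d)"
  using negative_dvd_3_le [of d] by (auto simp: padding_def)

lemma balance_0_padding: "balance_0 (padding d) = balance_code d - \<bar>d\<bar>"
  using negative_dvd_3_le [of d] by (auto simp: padding_def balance_code_def balance_0_def)

lemma balance_code_mod_15:
  "balance_code d mod 15 \<in> (if 0 \<le> d then {0, 3, 6, 9, 12} else if 3 dvd d then {7} else {5, 10})"
proof -
  consider (nonneg) "0 \<le> d" | (dvd) "d < 0" "3 dvd d" | (not_dvd) "d < 0" "\<not> 3 dvd d"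
    by linarith
  then show ?thesis
  proof cases
    case nonneg
    then have "balance_code d mod 15 = 3 * (d mod 5)"
      by (simp add: balance_code_def mod_mult_mult1 [symmetric])
    moreover have "0 \<le> d mod 5" "d mod 5 < 5"
      by simp_all
    ultimately show ?thesis
      using nonneg by auto
  next
    case dvd
    then show ?thesis
      by (simp add: balance_code_def) presburger
  next
    case not_dvd
    then have "balance_code d mod 15 = 5 * (- d mod 3)"
      by (simp add: balance_code_def mod_mult_mult1 [symmetric])
    moreover have "- d mod 3 \<noteq> 0"
      using not_dvd by (simp flip: dvd_eq_mod_eq_0)
    moreover have "0 \<le> - d mod 3" "- d mod 3 < 3"
      by simp_all
    ultimately show ?thesis
      using not_dvd by auto
  qed
qed

lemma inj_balance_code: "inj balance_code"
proof (rule injI)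
  fix d e assume eq: "balance_code d = balance_code e"
  then have "(0 \<le> d \<longleftrightarrow> 0 \<le> e) \<and> (d < 0 \<longrightarrow> (3 dvd d \<longleftrightarrow> 3 dvd e))"
    using balance_code_mod_15 [of d] balance_code_mod_15 [of e] by (auto split: if_splits)
  with eq show "d = e"
    by (auto simp: balance_code_def split: if_splits)
qed

definition encode :: "nat multiset \<Rightarrow> nat multiset" where
  "encode M = image_mset (if 0 \<le> balance_1 M then shift2 else shift4) M + padding (balance_1 M)"

lemma balance_0_encode:
  assumes "set_mset M \<subseteq> parts_A L 1"
  shows "balance_0 (encode M) = balance_code (balance_1 M)"
  using assms balance_0_image_shift2 balance_0_image_shift4
  by (simp add: encode_def balance_0_padding)

lemma balance_0_encode_mod_15:
  assumes "set_mset M \<subseteq> parts_A L 1"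
  shows "balance_0 (encode M) mod 15 \<in> {0, 3, 5, 6, 7, 9, 10, 12}"
  using balance_code_mod_15 [of "balance_1 M"]
  by (auto simp: balance_0_encode [OF assms] split: if_splits)

lemma sum_mset_encode:
  assumes "set_mset M \<subseteq> parts_A L 1"
  shows "sum_mset (encode M) = sum_mset M"
proof -
  have "int (sum_mset (encode M)) = int (sum_mset M)"
    using assms sum_mset_image_shift2 sum_mset_image_shift4 sum_mset_padding [of "balance_1 M"]
    unfolding encode_def sum_mset.union of_nat_add by simp
  then show ?thesis
    by (simp only: of_nat_eq_iff)
qed

lemma set_mset_encode:
  assumes "set_mset M \<subseteq> parts_A L 1"
  shows "set_mset (encode M) \<subseteq> parts_A L 0"
proof (cases "M = {#}")
  case True
  then show ?thesis
    by (simp add: encode_def padding_def balance_1_def)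
next
  case False
  then obtain k where "k \<in> parts_A L 1"
    using assms by fastforce
  then have "1 \<in> parts_A L 0" "7 \<in> parts_A L 0"
    unfolding mem_parts_A_0_iff mem_parts_A_1_iff by auto
  then show ?thesis
    using assms set_mset_padding shift2_mem_parts_A shift4_mem_parts_A
    by (fastforce simp: encode_def)
qed

lemma encode_mem_partitions:
  "M \<in> partitions (parts_A L 1) n \<Longrightarrow> encode M \<in> partitions (parts_A L 0) n"
  using set_mset_encode [of M L] sum_mset_encode [of M L] unfolding partitions_def by simp

lemma inj_on_encode: "inj_on encode {M. set_mset M \<subseteq> parts_A L 1}"
proof (rule inj_onI)
  fix M N
  assume M: "M \<in> {M. set_mset M \<subseteq> parts_A L 1}" and N: "N \<in> {M. set_mset M \<subseteq> parts_A L 1}"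
    and eq: "encode M = encode N"
  have "balance_code (balance_1 M) = balance_code (balance_1 N)"
    using M N eq by (simp add: balance_0_encode [symmetric])
  then have d: "balance_1 M = balance_1 N"
    by (rule injD [OF inj_balance_code])
  define f where "f = (if 0 \<le> balance_1 M then shift2 else shift4)"
  have "image_mset f M = image_mset f N"
    using eq by (simp add: encode_def f_def d)
  moreover have "inj_on f (parts_A L 1)"
    using inj_on_shift2 inj_on_shift4 by (simp add: f_def)
  ultimately show "M = N"
    using M N inj_on_image_mset by (metis inj_onD)
qed

lemma exists_sevens_count_mod_15:
  fixes n :: nat
  assumes "n \<notin> {0, 3, 5, 6}"
  obtains k where "7 * k \<le> n" "(int n - 8 * int k) mod 15 \<in> {1, 2, 4, 8, 11, 13, 14}"
proof -
  define r where "r = n mod 15"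
  have "r \<in> {..<15}" "r \<le> n"
    by (simp_all add: r_def)
  moreover have "r \<in> {0, 3, 5, 6} \<longrightarrow> 15 \<le> n"
    using assms by (cases "n < 15") (auto simp: r_def)
  moreover have "\<forall>r\<in>{..<15}. r \<le> n \<longrightarrow> (r \<in> {0, 3, 5, 6} \<longrightarrow> 15 \<le> n) \<longrightarrow>
      (\<exists>k\<in>{..<3}. 7 * k \<le> n \<and> (int r - 8 * int k) mod 15 \<in> {1, 2, 4, 8, 11, 13, 14})"
    by (simp add: lessThan_nat_numeral)
  ultimately obtain k where "7 * k \<le> n" "(int r - 8 * int k) mod 15 \<in> {1, 2, 4, 8, 11, 13, 14}"
    by blast
  moreover have "(int n - 8 * int k) mod 15 = (int r - 8 * int k) mod 15"
    by (simp add: r_def zmod_int mod_diff_left_eq)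
  ultimately show ?thesis
    using that by simp
qed

lemma exists_partition_not_encoded:
  assumes "1 \<le> L" and "n \<notin> {0, 3, 5, 6}"
  obtains T where "T \<in> partitions (parts_A L 0) n" "T \<notin> encode ` partitions (parts_A L 1) n"
proof -
  obtain k where k: "7 * k \<le> n" "(int n - 8 * int k) mod 15 \<in> {1, 2, 4, 8, 11, 13, 14}"
    using exists_sevens_count_mod_15 assms(2) by blast
  define T :: "nat multiset" where "T = replicate_mset (n - 7 * k) 1 + replicate_mset k 7"
  show ?thesis
  proof (rule that)
    show "T \<in> partitions (parts_A L 0) n"
      using assms(1) k(1) by (auto simp: T_def partitions_def mem_parts_A_0_iff)
    show "T \<notin> encode ` partitions (parts_A L 1) n"
    proof
      assume "T \<in> encode ` partitions (parts_A L 1) n"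
      then obtain M where "set_mset M \<subseteq> parts_A L 1" "T = encode M"
        by (auto simp: partitions_def)
      then have "balance_0 T mod 15 \<in> {0, 3, 5, 6, 7, 9, 10, 12}"
        using balance_0_encode_mod_15 by blast
      moreover have "balance_0 T = int n - 8 * int k"
        using k(1) by (simp add: T_def balance_0_def of_nat_diff)
      ultimately show False
        using k(2) by auto
    qed
  qed
qed

theorem theorem2:
  fixes L n :: nat
  shows "A L 1 n \<le> A L 0 n \<and> (L \<ge> 1 \<and> n \<notin> {0, 3, 5, 6} \<longrightarrow> A L 1 n < A L 0 n)"
proof -
  let ?P1 = "partitions (parts_A L 1) n" and ?P0 = "partitions (parts_A L 0) n"
  have fin: "finite ?P0"
    by (rule finite_partitions) (simp add: mem_parts_A_0_iff)
  have "inj_on encode ?P1"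
    using inj_on_encode by (rule inj_on_subset) (auto simp: partitions_def)
  then have card: "card (encode ` ?P1) = A L 1 n"
    by (simp add: card_image A_eq_card_partitions)
  have sub: "encode ` ?P1 \<subseteq> ?P0"
    using encode_mem_partitions by blast
  have "A L 1 n < A L 0 n" if strict: "L \<ge> 1" "n \<notin> {0, 3, 5, 6}"
  proof -
    obtain T where "T \<in> ?P0" "T \<notin> encode ` ?P1"
      by (rule exists_partition_not_encoded [OF strict])
    with sub have "encode ` ?P1 \<subset> ?P0"
      by blast
    then show ?thesis
      using fin card by (metis A_eq_card_partitions psubset_card_mono)
  qed
  moreover have "A L 1 n \<le> A L 0 n"
    using fin sub card by (metis A_eq_card_partitions card_mono)
  ultimately show ?thesis
    by blast
qed

end
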